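(* Let $n$ be a positive integer. There exists a form $F\in\mathbb{Z}[x_1,\ldots,x_n]$ (a polynomial $F\in\mathbb{Z}[x]$ if $n=1$), a prime number $p$, and $M>0$ such that $R(F)$ is dense in $\mathbb{Q}_p$, but $R(F)$ is not dense in $\mathbb{Q}_q$ for every prime $q>M$.
   Context: For $F\in\mathbb{Z}[x_1,\dots,x_n]$, $R(F)=\{F(\overline{x})/F(\overline{y}) : \overline{x},\overline{y}\in\mathbb{Z}^n,\ F(\overline{y})\neq 0\}$, and density is with respect to the $p$-adic (resp. $q$-adic) topology. *)

theory Defs
  imports Complex_Main "HOL-Library.Poly_Mapping" "HOL-Computational_Algebra.Primes"
begin

text \<open>Multivariate integer polynomials: a finitely supported map from monomials
  (finitely supported exponent vectors, variables indexed by nat) to integer coefficients.\<close>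
type_synonym int_mpoly = "(nat \<Rightarrow>\<^sub>0 nat) \<Rightarrow>\<^sub>0 int"

definition mpoly_eval :: "int_mpoly \<Rightarrow> (nat \<Rightarrow> int) \<Rightarrow> int" where
  "mpoly_eval F x = sum (\<lambda>m. Poly_Mapping.lookup F m * prod (\<lambda>i. x i ^ Poly_Mapping.lookup m i) (Poly_Mapping.keys m)) (Poly_Mapping.keys F)"

definition vars_below :: "nat \<Rightarrow> int_mpoly \<Rightarrow> bool" where
  "vars_below n F \<longleftrightarrow> (\<forall>m\<in>Poly_Mapping.keys F. Poly_Mapping.keys m \<subseteq> {..<n})"

definition total_degree_mon :: "(nat \<Rightarrow>\<^sub>0 nat) \<Rightarrow> nat" where
  "total_degree_mon m = (\<Sum>i\<in>Poly_Mapping.keys m. Poly_Mapping.lookup m i)"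

definition is_form :: "int_mpoly \<Rightarrow> bool" where
  "is_form F \<longleftrightarrow> (\<exists>d. \<forall>m\<in>Poly_Mapping.keys F. total_degree_mon m = d)"

text \<open>Integer points of Z^n: functions vanishing outside {..<n}.\<close>
definition int_points :: "nat \<Rightarrow> (nat \<Rightarrow> int) set" where
  "int_points n = {x. \<forall>i\<ge>n. x i = 0}"

definition ratio_set :: "nat \<Rightarrow> int_mpoly \<Rightarrow> rat set" where
  "ratio_set n F = {of_int (mpoly_eval F x) / of_int (mpoly_eval F y) | x y.
      x \<in> int_points n \<and> y \<in> int_points n \<and> mpoly_eval F y \<noteq> 0}"

definition padic_val_rat :: "nat \<Rightarrow> rat \<Rightarrow> int" where
  "padic_val_rat p r =
     (of_nat (multiplicity (int p) (fst (quotient_of r))) :: int)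
     - of_nat (multiplicity (int p) (snd (quotient_of r)))"

definition padic_abs :: "nat \<Rightarrow> rat \<Rightarrow> real" where
  "padic_abs p r = (if r = 0 then 0 else real p powr (- real_of_int (padic_val_rat p r)))"

text \<open>S \<subseteq> Q is dense in Q_p iff it is dense in Q for the p-adic metric (Q is dense in Q_p).\<close>
definition padic_dense :: "nat \<Rightarrow> rat set \<Rightarrow> bool" where
  "padic_dense p S \<longleftrightarrow> (\<forall>a::rat. \<forall>\<epsilon>>0. \<exists>s\<in>S. padic_abs p (s - a) < \<epsilon>)"

end

theory Submission
  imports Defs "HOL-Number_Theory.Residues"
begin

text \<open>
  Take F(x, y) = x^35 (x - y)^15 (x - 2y)^21 (x - 3y)^84 (x - 4y)^90 y^70, and f(x) = F(x, 1)
  when n = 1.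

  For a prime q > 4 any two of the six linear factors determine x and y modulo the same power
  of q, so all factors but one have the same q-adic valuation c, and v_q(F(x, y)) = 315 c + e s
  with e one of the exponents. Every exponent, like 315, is divisible by two of 3, 5, 7, so two
  values never have valuations differing by 1: no ratio has valuation 1, and the ratios stay
  away from q.

  For p = 2 the arguments x = 1 + 2^k t, 2 + 2^k t and 3 + 2^k give values 2^(15k+84) t^15 G,
  2^(21k+125) t^21 G and 2^(84k+15) G with G congruent to a fixed odd number modulo 2^(k-1).
  Odd powers permute the odd residues modulo 2^N, so quotients of two such values reach every
  odd residue, and their valuations 15k - 21l - 41, 21l - 15k + 41 and 15k - 84l + 69, with
  k and l arbitrarily large, cover all integers.
\<close>

section \<open>Evaluating integer polynomials\<close>

definition monomial_value :: "(nat \<Rightarrow>\<^sub>0 nat) \<Rightarrow> (nat \<Rightarrow> int) \<Rightarrow> int" where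
  "monomial_value m x = (\<Prod>i\<in>Poly_Mapping.keys m. x i ^ Poly_Mapping.lookup m i)"

lemma monomial_value_superset:
  assumes "finite S" "Poly_Mapping.keys m \<subseteq> S"
  shows "monomial_value m x = (\<Prod>i\<in>S. x i ^ Poly_Mapping.lookup m i)"
  unfolding monomial_value_def
  by (rule prod.mono_neutral_left) (use assms in \<open>auto simp: in_keys_iff\<close>)

lemma monomial_value_add: "monomial_value (m + m') x = monomial_value m x * monomial_value m' x"
proof -
  let ?S = "Poly_Mapping.keys m \<union> Poly_Mapping.keys m'"
  have "monomial_value (m + m') x = (\<Prod>i\<in>?S. x i ^ Poly_Mapping.lookup (m + m') i)"
    by (rule monomial_value_superset) (simp_all add: keys_add)
  also have "\<dots> = (\<Prod>i\<in>?S. x i ^ Poly_Mapping.lookup m i) * (\<Prod>i\<in>?S. x i ^ Poly_Mapping.lookup m' i)"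
    by (simp add: lookup_add power_add prod.distrib)
  also have "\<dots> = monomial_value m x * monomial_value m' x"
    by (subst (1 2) monomial_value_superset) auto
  finally show ?thesis .
qed

lemma mpoly_eval_superset:
  assumes "finite S" "Poly_Mapping.keys F \<subseteq> S"
  shows "mpoly_eval F x = (\<Sum>m\<in>S. Poly_Mapping.lookup F m * monomial_value m x)"
  unfolding mpoly_eval_def monomial_value_def[symmetric]
  by (rule sum.mono_neutral_left) (use assms in \<open>auto simp: in_keys_iff\<close>)

lemma mpoly_eval_single: "mpoly_eval (Poly_Mapping.single m a) x = a * monomial_value m x"
  by (simp add: mpoly_eval_def monomial_value_def)

lemma mpoly_eval_add: "mpoly_eval (F + G) x = mpoly_eval F x + mpoly_eval G x"
proof -
  let ?S = "Poly_Mapping.keys F \<union> Poly_Mapping.keys G"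
  show ?thesis
    by (subst (1 2 3) mpoly_eval_superset[of ?S])
       (auto simp: keys_add lookup_add distrib_right sum.distrib)
qed

lemma mpoly_eval_zero: "mpoly_eval 0 x = 0"
  by (simp add: mpoly_eval_def)

lemma mpoly_eval_sum: "mpoly_eval (sum f A) x = (\<Sum>a\<in>A. mpoly_eval (f a) x)"
  by (induction A rule: infinite_finite_induct) (simp_all add: mpoly_eval_add mpoly_eval_zero)

lemma mpoly_eq_sum_single: "F = (\<Sum>m\<in>Poly_Mapping.keys F. Poly_Mapping.single m (Poly_Mapping.lookup F m))"
  by (rule poly_mapping_eqI) (auto simp: lookup_sum lookup_single when_def in_keys_iff)

lemma mpoly_eval_mult: "mpoly_eval (F * G) x = mpoly_eval F x * mpoly_eval G x"
proof -
  have "F * G = (\<Sum>m\<in>Poly_Mapping.keys F. \<Sum>m'\<in>Poly_Mapping.keys G.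
          Poly_Mapping.single m (Poly_Mapping.lookup F m) * Poly_Mapping.single m' (Poly_Mapping.lookup G m'))"
    by (subst mpoly_eq_sum_single[of F], subst mpoly_eq_sum_single[of G]) (simp add: sum_product)
  then have "mpoly_eval (F * G) x = (\<Sum>m\<in>Poly_Mapping.keys F. \<Sum>m'\<in>Poly_Mapping.keys G.
          Poly_Mapping.lookup F m * Poly_Mapping.lookup G m' * monomial_value (m + m') x)"
    by (simp add: mpoly_eval_sum mult_single mpoly_eval_single)
  also have "\<dots> = mpoly_eval F x * mpoly_eval G x"
    by (simp add: mpoly_eval_def monomial_value_def[symmetric] sum_product monomial_value_add mult_ac)
  finally show ?thesis .
qed

lemma mpoly_eval_one: "mpoly_eval 1 x = 1"
  by (simp add: mpoly_eval_single monomial_value_def flip: single_one)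

lemma mpoly_eval_numeral: "mpoly_eval (numeral k) x = numeral k"
  by (simp add: mpoly_eval_single monomial_value_def flip: single_numeral)

lemma mpoly_eval_uminus: "mpoly_eval (- F) x = - mpoly_eval F x"
  using mpoly_eval_add[of F "- F" x] by (simp add: mpoly_eval_zero)

lemma mpoly_eval_diff: "mpoly_eval (F - G) x = mpoly_eval F x - mpoly_eval G x"
  using mpoly_eval_add[of F "- G" x] by (simp add: mpoly_eval_uminus)

lemma mpoly_eval_power: "mpoly_eval (F ^ k) x = mpoly_eval F x ^ k"
  by (induction k) (simp_all add: mpoly_eval_one mpoly_eval_mult)

definition mvar :: "nat \<Rightarrow> int_mpoly" where
  "mvar i = Poly_Mapping.single (Poly_Mapping.single i 1) 1"

lemma mpoly_eval_mvar: "mpoly_eval (mvar i) x = x i"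
  by (simp add: mvar_def mpoly_eval_single monomial_value_def)

lemmas mpoly_eval_simps = mpoly_eval_add mpoly_eval_mult mpoly_eval_one mpoly_eval_numeral
  mpoly_eval_uminus mpoly_eval_diff mpoly_eval_power mpoly_eval_mvar

lemma vars_below_add: "vars_below n F \<Longrightarrow> vars_below n G \<Longrightarrow> vars_below n (F + G)"
  unfolding vars_below_def using keys_add[of F G] by blast

lemma vars_below_uminus: "vars_below n F \<Longrightarrow> vars_below n (- F)"
  unfolding vars_below_def by simp

lemma vars_below_diff: "vars_below n F \<Longrightarrow> vars_below n G \<Longrightarrow> vars_below n (F - G)"
  using vars_below_add[of n F "- G"] vars_below_uminus[of n G] by simp

lemma vars_below_mult:
  assumes "vars_below n F" "vars_below n G"
  shows "vars_below n (F * G)"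
  unfolding vars_below_def
proof
  fix m assume "m \<in> Poly_Mapping.keys (F * G)"
  then obtain a b where "m = a + b" "a \<in> Poly_Mapping.keys F" "b \<in> Poly_Mapping.keys G"
    using keys_mult[of F G] by blast
  then show "Poly_Mapping.keys m \<subseteq> {..<n}"
    using assms keys_add[of a b] unfolding vars_below_def by blast
qed

lemma vars_below_one: "vars_below n 1"
  unfolding vars_below_def by (simp flip: single_one)

lemma vars_below_numeral: "vars_below n (numeral k)"
  unfolding vars_below_def by (simp flip: single_numeral)

lemma vars_below_power: "vars_below n F \<Longrightarrow> vars_below n (F ^ k)"
  by (induction k) (simp_all add: vars_below_one vars_below_mult)

lemma vars_below_mvar: "i < n \<Longrightarrow> vars_below n (mvar i)"
  unfolding vars_below_def mvar_def by simp

definition homogeneous :: "nat \<Rightarrow> int_mpoly \<Rightarrow> bool" where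
  "homogeneous d F \<longleftrightarrow> (\<forall>m\<in>Poly_Mapping.keys F. total_degree_mon m = d)"

lemma homogeneous_imp_is_form: "homogeneous d F \<Longrightarrow> is_form F"
  unfolding homogeneous_def is_form_def by blast

lemma total_degree_mon_add: "total_degree_mon (m + m') = total_degree_mon m + total_degree_mon m'"
proof -
  have sum_superset: "total_degree_mon a = (\<Sum>i\<in>S. Poly_Mapping.lookup a i)"
    if "finite S" "Poly_Mapping.keys a \<subseteq> S" for a S
    unfolding total_degree_mon_def
    by (rule sum.mono_neutral_left) (use that in \<open>auto simp: in_keys_iff\<close>)
  show ?thesis
    by (subst (1 2 3) sum_superset[of "Poly_Mapping.keys m \<union> Poly_Mapping.keys m'"])
       (auto simp: keys_add lookup_add sum.distrib)
qed

lemma homogeneous_add: "homogeneous d F \<Longrightarrow> homogeneous d G \<Longrightarrow> homogeneous d (F + G)"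
  unfolding homogeneous_def using keys_add[of F G] by blast

lemma homogeneous_diff: "homogeneous d F \<Longrightarrow> homogeneous d G \<Longrightarrow> homogeneous d (F - G)"
  using homogeneous_add[of d F "- G"] by (simp add: homogeneous_def)

lemma homogeneous_mult:
  assumes "homogeneous d F" "homogeneous d' G"
  shows "homogeneous (d + d') (F * G)"
  unfolding homogeneous_def
proof
  fix m assume "m \<in> Poly_Mapping.keys (F * G)"
  then obtain a b where "m = a + b" "a \<in> Poly_Mapping.keys F" "b \<in> Poly_Mapping.keys G"
    using keys_mult[of F G] by blast
  then show "total_degree_mon m = d + d'"
    using assms unfolding homogeneous_def by (simp add: total_degree_mon_add)
qed

lemma homogeneous_one: "homogeneous 0 1"
  unfolding homogeneous_def by (simp add: total_degree_mon_def flip: single_one)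

lemma homogeneous_numeral: "homogeneous 0 (numeral k)"
  unfolding homogeneous_def by (simp add: total_degree_mon_def flip: single_numeral)

lemma homogeneous_power: "homogeneous d F \<Longrightarrow> homogeneous (k * d) (F ^ k)"
  by (induction k) (simp_all add: homogeneous_one homogeneous_mult)

lemma homogeneous_mvar: "homogeneous 1 (mvar i)"
  unfolding homogeneous_def mvar_def by (simp add: total_degree_mon_def)

section \<open>The form and its q-adic valuations\<close>

definition form_value :: "int \<Rightarrow> int \<Rightarrow> int" where
  "form_value u w = u^35 * (u - w)^15 * (u - 2*w)^21 * (u - 3*w)^84 * (u - 4*w)^90 * w^70"

definition form_factor :: "nat \<Rightarrow> int \<Rightarrow> int \<Rightarrow> int" where
  "form_factor i u w = (if i < 5 then u - int i * w else w)"

definition form_exponent :: "nat \<Rightarrow> nat" where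
  "form_exponent i = [35, 15, 21, 84, 90, 70] ! i"

lemma form_value_eq_prod: "form_value u w = (\<Prod>i<6. form_factor i u w ^ form_exponent i)"
  by (simp add: form_value_def form_factor_def form_exponent_def lessThan_nat_numeral mult_ac)

lemma form_exponent_cases:
  assumes "i < 6"
  shows "form_exponent i \<in> {35, 15, 21, 84, 90, 70}"
proof -
  have "i \<in> {0, 1, 2, 3, 4, 5}" using assms by auto
  then show ?thesis by (auto simp: form_exponent_def)
qed

lemma sum_form_exponent: "(\<Sum>i<6. form_exponent i) = 315"
  by (simp add: form_exponent_def lessThan_nat_numeral)

lemma multiplicity_prod_power_one_exceptional_factor:
  fixes L :: "'i \<Rightarrow> 'a :: factorial_semiring"
  assumes q: "prime_elem q" and I: "finite I" "I \<noteq> {}" and nz: "0 \<notin> L ` I"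
    and dvd_two_imp_dvd_all: "\<And>i j k n. i \<in> I \<Longrightarrow> j \<in> I \<Longrightarrow> i \<noteq> j \<Longrightarrow> q ^ n dvd L i \<Longrightarrow> q ^ n dvd L j
                     \<Longrightarrow> k \<in> I \<Longrightarrow> q ^ n dvd L k"
  obtains c s j where "j \<in> I" "multiplicity q (\<Prod>i\<in>I. L i ^ e i) = c * (\<Sum>i\<in>I. e i) + s * e j"
proof -
  define v where "v i = multiplicity q (L i)" for i
  have q_nonunit: "\<not> is_unit q" using q by (simp add: prime_elem_def)
  have pow_dvd_iff: "q ^ n dvd L i \<longleftrightarrow> n \<le> v i" if "i \<in> I" for i n
    unfolding v_def using nz that by (intro power_dvd_iff_le_multiplicity q_nonunit) auto
  have mult_prod: "multiplicity q (\<Prod>i\<in>I. L i ^ e i) = (\<Sum>i\<in>I. e i * v i)"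
    using nz I by (simp add: prime_elem_multiplicity_prod_distrib[OF q] v_def
                    prime_elem_multiplicity_power_distrib[OF q] image_iff)
  define c where "c = Min (v ` I)"
  have "c \<in> v ` I"
    unfolding c_def using I by (intro Min_in) auto
  then obtain i0 where i0: "i0 \<in> I" "v i0 = c"
    by blast
  have c_le: "c \<le> v i" if "i \<in> I" for i
    using I that unfolding c_def by simp
  have at_most_one_above: "i = j" if "i \<in> I" "j \<in> I" "c < v i" "c < v j" for i j
  proof (rule ccontr)
    assume "i \<noteq> j"
    have "q ^ Suc c dvd L i" "q ^ Suc c dvd L j"
      using that pow_dvd_iff[of i "Suc c"] pow_dvd_iff[of j "Suc c"] by (simp_all del: power_Suc)
    then have "q ^ Suc c dvd L i0"
      using dvd_two_imp_dvd_all \<open>i \<noteq> j\<close> that i0 by blast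
    then show False
      using pow_dvd_iff[of i0 "Suc c"] i0 by (simp del: power_Suc)
  qed
  obtain j where j: "j \<in> I" "\<And>i. i \<in> I \<Longrightarrow> i \<noteq> j \<Longrightarrow> v i = c"
    using at_most_one_above c_le i0 by (metis le_neq_implies_less)
  obtain s where s: "v j = c + s"
    using c_le[OF j(1)] le_Suc_ex by blast
  have "(\<Sum>i\<in>I. e i * v i) = e j * (c + s) + (\<Sum>i\<in>I - {j}. e i * c)"
    using I j s by (simp add: sum.remove)
  also have "\<dots> = c * (\<Sum>i\<in>I. e i) + s * e j"
    using I j by (simp add: sum.remove sum_distrib_left algebra_simps)
  finally show ?thesis
    using that j(1) mult_prod by metis
qed

lemma coprime_prime_power_if_abs_less:
  fixes q :: nat and d :: int
  assumes "prime q" "d \<noteq> 0" "\<bar>d\<bar> < int q"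
  shows "coprime (int q ^ n) d"
proof -
  have "\<not> int q dvd d"
  proof
    assume "int q dvd d"
    then have "\<bar>int q\<bar> \<le> \<bar>d\<bar>" using assms(2) dvd_imp_le_int by blast
    with assms(3) show False by simp
  qed
  then show ?thesis
    using assms(1) by (simp add: prime_imp_coprime)
qed

lemma prime_power_dvd_two_form_factors_imp_dvd_all:
  fixes q n :: nat
  defines "Q \<equiv> int q ^ n"
  assumes q: "prime q" "q > 4" and ij: "i < 6" "j < 6" "i \<noteq> j"
    and dvd: "Q dvd form_factor i u w" "Q dvd form_factor j u w" and k: "k < 6"
  shows "Q dvd form_factor k u w"
proof -
  have "Q dvd w"
  proof (cases "i < 5 \<and> j < 5")
    case True
    then have "form_factor i u w - form_factor j u w = (int j - int i) * w"
      by (simp add: form_factor_def algebra_simps)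
    then have "Q dvd (int j - int i) * w"
      using dvd by (metis dvd_diff)
    moreover have "coprime Q (int j - int i)"
      unfolding Q_def using True ij q by (intro coprime_prime_power_if_abs_less) auto
    ultimately show ?thesis
      using coprime_dvd_mult_right_iff by blast
  next
    case False
    then show ?thesis
      using ij dvd by (auto simp: form_factor_def split: if_splits)
  qed
  moreover have "Q dvd u"
  proof -
    have "i < 5 \<or> j < 5" using ij by auto
    then obtain l where "l \<in> {i, j}" "l < 5" by blast
    then have "u = form_factor l u w + int l * w" "Q dvd form_factor l u w"
      using dvd by (auto simp: form_factor_def)
    then show ?thesis using \<open>Q dvd w\<close> by (metis dvd_add dvd_mult)
  qed
  ultimately show ?thesis
    by (simp add: form_factor_def)
qed

definition divisible_by_two_of_3_5_7 :: "nat \<Rightarrow> bool" where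
  "divisible_by_two_of_3_5_7 a \<longleftrightarrow> (3 dvd a \<and> 5 dvd a) \<or> (3 dvd a \<and> 7 dvd a) \<or> (5 dvd a \<and> 7 dvd a)"

lemma divisible_by_two_of_3_5_7_not_succ:
  assumes "divisible_by_two_of_3_5_7 a"
  shows "\<not> divisible_by_two_of_3_5_7 (a + 1)"
proof -
  have "\<not> (r dvd a \<and> r dvd a + 1)" if "r > 1" for r :: nat
    using that by (metis dvd_add_right_iff nat_dvd_1_iff_1 less_irrefl)
  from this[of 3] this[of 5] this[of 7] show ?thesis
    using assms unfolding divisible_by_two_of_3_5_7_def by auto
qed

lemma divisible_by_two_of_3_5_7_combination:
  assumes "e \<in> {35, 15, 21, 84, 90, 70}"
  shows "divisible_by_two_of_3_5_7 (c * 315 + s * e)"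
proof -
  have "r dvd c * 315 + s * e" if "r dvd 315" "r dvd e" for r
    using that by simp
  then show ?thesis
    using assms unfolding divisible_by_two_of_3_5_7_def by auto
qed

lemma divisible_by_two_of_3_5_7_multiplicity_form_value:
  fixes q :: nat
  assumes q: "prime q" "q > 4" and nz: "form_value u w \<noteq> 0"
  shows "divisible_by_two_of_3_5_7 (multiplicity (int q) (form_value u w))"
proof -
  have "form_factor i u w \<noteq> 0" if "i < 6" for i
  proof
    assume "form_factor i u w = 0"
    moreover have "form_exponent i > 0" using form_exponent_cases[OF that] by auto
    ultimately show False using nz that by (auto simp: form_value_eq_prod)
  qed
  then have factors_nz: "0 \<notin> (\<lambda>i. form_factor i u w) ` {..<6}"
    by auto
  have dvd_two_imp_dvd_all: "\<And>i j k n. i \<in> {..<6} \<Longrightarrow> j \<in> {..<6} \<Longrightarrow> i \<noteq> j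
      \<Longrightarrow> int q ^ n dvd form_factor i u w \<Longrightarrow> int q ^ n dvd form_factor j u w
      \<Longrightarrow> k \<in> {..<6} \<Longrightarrow> int q ^ n dvd form_factor k u w"
    unfolding lessThan_iff by (rule prime_power_dvd_two_form_factors_imp_dvd_all[OF q])
  have q_prime: "prime_elem (int q)" using q by simp
  have nonempty: "{..<6::nat} \<noteq> {}" by (simp add: lessThan_empty_iff)
  obtain c s j where j: "j \<in> {..<6}"
    "multiplicity (int q) (\<Prod>i<6. form_factor i u w ^ form_exponent i)
       = c * (\<Sum>i<6. form_exponent i) + s * form_exponent j"
    by (rule multiplicity_prod_power_one_exceptional_factor[OF q_prime finite_lessThan nonempty factors_nz,
          where e = form_exponent]) (use dvd_two_imp_dvd_all in blast)+
  then have "multiplicity (int q) (form_value u w) = c * 315 + s * form_exponent j"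
    by (simp add: form_value_eq_prod sum_form_exponent)
  then show ?thesis
    using divisible_by_two_of_3_5_7_combination[OF form_exponent_cases] j by simp
qed

section \<open>Non-density for primes q > 4\<close>

lemma padic_val_rat_of_int_div:
  fixes p :: nat and A B :: int
  assumes p: "prime p" and A: "A \<noteq> 0" and B: "B \<noteq> 0"
  shows "padic_val_rat p (of_int A / of_int B)
           = int (multiplicity (int p) A) - int (multiplicity (int p) B)"
proof -
  obtain a b where ab: "quotient_of (of_int A / of_int B) = (a, b)"
    by (cases "quotient_of (of_int A / of_int B)")
  have b: "b > 0" using quotient_of_denom_pos[OF ab] .
  have "(of_int A / of_int B :: rat) = of_int a / of_int b" using quotient_of_div[OF ab] .
  then have "of_int (A * b) = (of_int (a * B) :: rat)" using B b by (simp add: field_simps)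
  then have cross: "A * b = a * B" by (simp only: of_int_eq_iff)
  have a: "a \<noteq> 0" using cross A b by auto
  have "prime_elem (int p)" using p by simp
  then have "multiplicity (int p) A + multiplicity (int p) b
               = multiplicity (int p) a + multiplicity (int p) B"
    using cross A B a b by (metis prime_elem_multiplicity_mult_distrib less_irrefl)
  then show ?thesis unfolding padic_val_rat_def ab by simp
qed

lemma padic_abs_of_int_div:
  fixes p :: nat and A B :: int
  assumes "prime p" "A \<noteq> 0" "B \<noteq> 0"
  shows "padic_abs p (of_int A / of_int B)
           = real p powr - (real (multiplicity (int p) A) - real (multiplicity (int p) B))"
  using assms by (simp add: padic_abs_def padic_val_rat_of_int_div)

lemma padic_abs_of_int_div_le:
  fixes p k :: nat and A B :: int
  assumes p: "prime p" and B: "B \<noteq> 0" and dvd: "int p ^ k dvd A"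
  shows "padic_abs p (of_int A / of_int B) \<le> real p powr - (real k - real (multiplicity (int p) B))"
proof (cases "A = 0")
  case True
  then show ?thesis by (simp add: padic_abs_def)
next
  case False
  have "\<not> is_unit (int p)" using p by auto
  then have "k \<le> multiplicity (int p) A"
    using power_dvd_iff_le_multiplicity[OF False] dvd by blast
  moreover have "p > 1" using p prime_gt_1_nat by blast
  ultimately show ?thesis
    using False B p by (simp add: padic_abs_of_int_div)
qed

lemma prime_power_dvd_if_padic_abs_less:
  fixes p k :: nat and A B :: int
  assumes p: "prime p" and B: "B \<noteq> 0"
    and small: "padic_abs p (of_int A / of_int B) < real p powr - real k"
  shows "int p ^ (multiplicity (int p) B + k + 1) dvd A"
proof (cases "A = 0")
  case False
  have "p > 1" using p prime_gt_1_nat by blast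
  then have "- (real (multiplicity (int p) A) - real (multiplicity (int p) B)) < - real k"
    using small padic_abs_of_int_div[OF p False B] by simp
  then have "multiplicity (int p) B + k + 1 \<le> multiplicity (int p) A"
    by linarith
  moreover have "\<not> is_unit (int p)" using p by auto
  ultimately show ?thesis
    using power_dvd_iff_le_multiplicity[OF False] by blast
qed simp

lemma multiplicity_eq_Suc_if_close_to_prime:
  fixes q :: nat and X Y :: int
  assumes q: "prime q" and Y: "Y \<noteq> 0"
    and close: "padic_abs q (of_int X / of_int Y - of_nat q) < 1 / real q"
  shows "X \<noteq> 0 \<and> multiplicity (int q) X = Suc (multiplicity (int q) Y)"
proof -
  define Q where "Q = int q"
  define v where "v = multiplicity Q Y"
  define D where "D = X - Q * Y"
  have q1: "q > 1" using q prime_gt_1_nat by blast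
  have Q_nonunit: "\<not> is_unit Q" using q unfolding Q_def by auto
  have "(of_int X / of_int Y - of_nat q :: rat) = of_int D / of_int Y"
    using Y by (simp add: D_def Q_def field_simps)
  with close have "padic_abs q (of_int D / of_int Y) < real q powr - real (1::nat)"
    using q1 by (simp add: powr_minus_divide)
  then have "Q ^ (v + 1 + 1) dvd D"
    unfolding Q_def v_def by (rule prime_power_dvd_if_padic_abs_less[OF q Y])
  then have "Q ^ Suc (Suc v) dvd D"
    by simp
  moreover have "Q ^ Suc v dvd Q * Y"
    unfolding v_def by (simp add: multiplicity_dvd)
  moreover have "\<not> Q ^ Suc (Suc v) dvd Q * Y"
  proof -
    have "multiplicity Q (Q * Y) = Suc v"
      unfolding v_def using Y Q_nonunit q1 by (simp add: Q_def multiplicity_times_same)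
    moreover have "Q * Y \<noteq> 0" using Y q1 by (simp add: Q_def)
    ultimately show ?thesis
      by (simp add: power_dvd_iff_le_multiplicity[OF _ Q_nonunit] del: power_Suc)
  qed
  moreover have "X = D + Q * Y" by (simp add: D_def)
  moreover have "Q ^ Suc v dvd Q ^ Suc (Suc v)" by (simp add: le_imp_power_dvd)
  ultimately have "Q ^ Suc v dvd X" "\<not> Q ^ Suc (Suc v) dvd X"
    by (metis dvd_add dvd_trans, metis dvd_add_right_iff)
  then show ?thesis
    by (auto simp: Q_def v_def intro: multiplicity_eqI)
qed

definition int_quotients :: "int set \<Rightarrow> rat set" where
  "int_quotients V = {of_int a / of_int b | a b. a \<in> V \<and> b \<in> V \<and> b \<noteq> 0}"

lemma padic_dense_mono: "padic_dense p S \<Longrightarrow> S \<subseteq> T \<Longrightarrow> padic_dense p T"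
  unfolding padic_dense_def by blast

lemma int_quotients_mono: "V \<subseteq> W \<Longrightarrow> int_quotients V \<subseteq> int_quotients W"
  unfolding int_quotients_def by blast

lemma not_padic_dense_form_quotients:
  fixes q :: nat
  assumes q: "prime q" "q > 4" and V: "V \<subseteq> {form_value u w | u w. True}"
  shows "\<not> padic_dense q (int_quotients V)"
proof
  assume "padic_dense q (int_quotients V)"
  moreover have "1 / real q > 0" using q by simp
  ultimately obtain X Y where XY: "X \<in> V" "Y \<in> V" "Y \<noteq> 0"
    and close: "padic_abs q (of_int X / of_int Y - of_nat q) < 1 / real q"
    unfolding padic_dense_def int_quotients_def by blast
  from XY V obtain u w u' w' where "X = form_value u w" "Y = form_value u' w'"
    by blast
  with multiplicity_eq_Suc_if_close_to_prime[OF q(1) XY(3) close] XY(3) q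
  show False
    using divisible_by_two_of_3_5_7_multiplicity_form_value divisible_by_two_of_3_5_7_not_succ
    by (metis Suc_eq_plus1)
qed

section \<open>Density in the 2-adic numbers\<close>

lemma power_residue_exists:
  fixes m r :: int and e :: nat
  assumes m: "m > 1" and r: "coprime r m" and e: "e > 0" "coprime e (totient (nat m))"
  obtains t where "[t ^ e = r] (mod m)"
proof -
  obtain x y where xy: "e * x = totient (nat m) * y + 1"
    using bezout_nat[of e "totient (nat m)"] e by auto
  have "[r ^ totient (nat m) = 1] (mod m)"
    using residues.euler_theorem[of m r] m r by (simp add: residues_def)
  then have "[(r ^ totient (nat m)) ^ y * r = 1 ^ y * r] (mod m)"
    by (intro cong_mult cong_pow cong_refl)
  then have "[(r ^ x) ^ e = r] (mod m)"
    by (simp add: xy power_add power_mult mult.commute flip: power_mult)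
  then show ?thesis using that by blast
qed

lemma odd_power_residue_mod_two_power:
  fixes r :: int and e N :: nat
  assumes "odd e" "odd r"
  obtains t where "[t ^ e = r] (mod 2 ^ N)"
proof (cases "N = 0")
  case True
  then show ?thesis using that[of r] by simp
next
  case False
  have "totient (nat (2 ^ N)) = 2 ^ (N - 1)"
    using False by (simp add: nat_power_eq totient_prime_power)
  then have "coprime e (totient (nat (2 ^ N)))"
    using assms(1) by (simp add: coprime_power_right_iff coprime_right_2_iff_odd)
  moreover have "coprime r (2 ^ N)"
    using assms(2) by (simp add: coprime_power_right_iff coprime_right_2_iff_odd)
  moreover have "(2::int) ^ N > 1"
    using False by (simp add: one_less_power)
  moreover have "e > 0"
    using assms(1) by (rule odd_pos)
  ultimately show ?thesis
    using power_residue_exists that by blast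
qed

lemma exists_two_powr_less:
  fixes \<epsilon> :: real
  assumes "\<epsilon> > 0"
  obtains N :: nat where "2 powr - real N < \<epsilon>"
proof -
  obtain N where "(1 / 2 :: real) ^ N < \<epsilon>"
    using real_arch_pow_inv[OF assms, of "1 / 2"] by auto
  moreover have "2 powr - real N = (1 / 2 :: real) ^ N"
    by (simp add: powr_minus powr_realpow power_one_over inverse_eq_divide)
  ultimately have "2 powr - real N < \<epsilon>" by simp
  then show ?thesis by (rule that)
qed

lemma linear_diophantine_large_solutions:
  fixes a b :: nat and r :: int
  assumes a: "a > 0" and b: "b > 0" and r: "int (gcd a b) dvd r"
  obtains x y :: nat where "x \<ge> K" "y \<ge> K" "int a * int x - int b * int y = r"
proof -
  obtain s t where st: "s * int a + t * int b = int (gcd a b)"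
    using bezout_int[of "int a" "int b"] by (auto simp: gcd_int_def)
  obtain h where h: "r = int (gcd a b) * h" using r by (elim dvdE)
  define T where "T = \<bar>s * h\<bar> + \<bar>t * h\<bar> + int K"
  define x where "x = s * h + int b * T"
  define y where "y = - t * h + int a * T"
  have "T \<ge> 0" unfolding T_def by simp
  then have "T \<le> int b * T" "T \<le> int a * T"
    using a b by (simp_all add: mult_le_cancel_right1)
  then have "x \<ge> int K" "y \<ge> int K"
    unfolding x_def y_def T_def by linarith+
  moreover have "int a * x - int b * y = r"
    unfolding x_def y_def h st[symmetric] by (simp add: algebra_simps)
  ultimately show ?thesis
    using that[of "nat x" "nat y"] by simp
qed

lemma rat_two_adic_decomposition:
  fixes a :: rat
  assumes "a \<noteq> 0"
  obtains al be :: nat and P Q :: int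
  where "odd P" "odd Q" "a = of_int (2 ^ al * P) / of_int (2 ^ be * Q)"
proof -
  obtain A B where AB: "quotient_of a = (A, B)" by (cases "quotient_of a")
  have a: "a = of_int A / of_int B" using quotient_of_div[OF AB] .
  have "B \<noteq> 0" using quotient_of_denom_pos[OF AB] by simp
  moreover have "A \<noteq> 0" using a assms by auto
  moreover have "\<not> is_unit (2::int)" by simp
  ultimately obtain P Q where "A = 2 ^ multiplicity 2 A * P" "\<not> 2 dvd P"
      "B = 2 ^ multiplicity 2 B * Q" "\<not> 2 dvd Q"
    using multiplicity_decompose' by metis
  then show ?thesis
    using that a by metis
qed

lemma padic_abs_two_quotient_diff_le:
  fixes X Y U V P Q :: int and E W al be N :: nat
  assumes X: "X = 2 ^ E * U" and Y: "Y = 2 ^ W * V" "odd V" and Q: "odd Q"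
    and exponents: "E + be = al + W" and unit_parts: "[U * Q = P * V] (mod 2 ^ N)"
  shows "padic_abs 2 (of_int X / of_int Y - of_int (2 ^ al * P) / of_int (2 ^ be * Q))
           \<le> 2 powr - (real al - real be + real N)"
proof -
  have nz: "Y \<noteq> 0" "2 ^ be * Q \<noteq> 0" using Y Q by auto
  have diff: "(of_int X / of_int Y - of_int (2 ^ al * P) / of_int (2 ^ be * Q) :: rat)
                = of_int (X * (2 ^ be * Q) - 2 ^ al * P * Y) / of_int (Y * (2 ^ be * Q))"
    using nz by (simp add: field_simps)
  have "X * (2 ^ be * Q) - 2 ^ al * P * Y = 2 ^ (E + be) * (U * Q) - 2 ^ (al + W) * (P * V)"
    unfolding X Y by (simp add: power_add algebra_simps)
  also have "\<dots> = 2 ^ (E + be) * (U * Q - P * V)"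
    unfolding exponents by (simp add: algebra_simps)
  finally have "X * (2 ^ be * Q) - 2 ^ al * P * Y = 2 ^ (E + be) * (U * Q - P * V)" .
  then have "int 2 ^ (E + be + N) dvd X * (2 ^ be * Q) - 2 ^ al * P * Y"
    using unit_parts by (simp add: cong_iff_dvd_diff power_add mult_dvd_mono cong_sym_eq)
  moreover have "multiplicity (int 2) (Y * (2 ^ be * Q)) = W + be"
    by (rule multiplicity_decomposeI[where x' = "V * Q"]) (use Y Q in \<open>auto simp: power_add\<close>)
  ultimately have "padic_abs 2 (of_int (X * (2 ^ be * Q) - 2 ^ al * P * Y) / of_int (Y * (2 ^ be * Q)))
                     \<le> real 2 powr - (real (E + be + N) - real (W + be))"
    using padic_abs_of_int_div_le[of 2 "Y * (2 ^ be * Q)"] nz by fastforce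
  also have "real (E + be + N) - real (W + be) = real al - real be + real N"
    using exponents by linarith
  finally show ?thesis unfolding diff by simp
qed

text \<open>
  The parameter k fixes the 2-adic valuation c k + d of the value; when e is odd, t can be
  chosen to give its unit part any odd residue modulo 2^N for N < k.
\<close>

definition two_adic_family :: "(int \<Rightarrow> int) \<Rightarrow> nat \<Rightarrow> nat \<Rightarrow> nat \<Rightarrow> int \<Rightarrow> bool" where
  "two_adic_family f c d e g \<longleftrightarrow> odd g \<and>
     (\<forall>k\<ge>2. \<forall>t. \<exists>u G. f u = 2 ^ (c * k + d) * t ^ e * G \<and> [G = g] (mod 2 ^ (k - 1)))"

lemma odd_if_cong_mod_two_power:
  fixes G g :: int
  assumes "[G = g] (mod 2 ^ n)" "n > 0" "odd g"
  shows "odd G"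
proof -
  have "[G = g] (mod 2)"
    using assms(1) by (rule cong_dvd_modulus) (use assms(2) in simp)
  then show ?thesis
    using assms(3) by (simp add: cong_def odd_iff_mod_2_eq_one)
qed

lemma two_adic_family_odd_value:
  assumes fam: "two_adic_family f c d e g" and k: "k \<ge> 2"
  obtains v V where "f v = 2 ^ (c * k + d) * V" "odd V"
proof -
  obtain v G where "f v = 2 ^ (c * k + d) * 1 ^ e * G" "[G = g] (mod 2 ^ (k - 1))"
    using fam k unfolding two_adic_family_def by blast
  moreover have "odd G"
    using calculation(2) by (rule odd_if_cong_mod_two_power) (use k fam in \<open>auto simp: two_adic_family_def\<close>)
  ultimately show ?thesis using that by simp
qed

lemma two_adic_family_value_with_unit_part:
  assumes fam: "two_adic_family f c d e g" and e: "odd e"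
    and N: "0 < N" "N < k" and Q: "odd Q" and R: "odd R"
  obtains u U where "f u = 2 ^ (c * k + d) * U" "[U * Q = R] (mod 2 ^ N)"
proof -
  have g: "odd g" using fam by (simp add: two_adic_family_def)
  then have "coprime (g * Q) (2 ^ N)"
    using Q by simp
  then obtain x where x: "[g * Q * x = 1] (mod 2 ^ N)"
    using cong_solve_coprime_int by blast
  then have "odd (g * Q * x)"
    by (rule odd_if_cong_mod_two_power[OF _ N(1)]) simp
  then have "odd (R * x)"
    using R by simp
  then obtain t where t: "[t ^ e = R * x] (mod 2 ^ N)"
    by (rule odd_power_residue_mod_two_power[OF e])
  have "2 \<le> k" using N by linarith
  then obtain u G where u: "f u = 2 ^ (c * k + d) * t ^ e * G" and G: "[G = g] (mod 2 ^ (k - 1))"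
    using fam unfolding two_adic_family_def by blast
  have G': "[G = g] (mod 2 ^ N)"
    using G by (rule cong_dvd_modulus) (use N in \<open>simp add: le_imp_power_dvd\<close>)
  then have "[t ^ e * G * Q = R * x * g * Q] (mod 2 ^ N)"
    using t G' by (intro cong_mult cong_refl)
  also have "R * x * g * Q = R * (g * Q * x)"
    by (simp add: mult_ac)
  also have "[\<dots> = R * 1] (mod 2 ^ N)"
    using x by (intro cong_mult cong_refl)
  finally have unit: "[t ^ e * G * Q = R] (mod 2 ^ N)"
    by simp
  have "f u = 2 ^ (c * k + d) * (t ^ e * G)"
    using u by (simp only: mult.assoc)
  then show ?thesis
    using unit by (rule that)
qed

lemma two_adic_family_A: "two_adic_family (\<lambda>u. form_value u 1) 15 84 15 (- (3 ^ 90))"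
  unfolding two_adic_family_def
proof (intro conjI allI impI)
  fix k :: nat and t :: int
  assume k: "k \<ge> 2"
  define s where "s = 2 ^ (k - 1) * t"
  define G where "G = (1 + 2 * s) ^ 35 * (2 * s - 1) ^ 21 * (s - 1) ^ 84 * (2 * s - 3) ^ 90"
  have two_pow: "(2::int) ^ k = 2 * 2 ^ (k - 1)"
    using k by (simp flip: power_Suc)
  have "form_value (1 + 2 ^ k * t) 1
          = (1 + 2 * s) ^ 35 * (2 ^ k * t) ^ 15 * (2 * s - 1) ^ 21 * (2 * (s - 1)) ^ 84 * (2 * s - 3) ^ 90"
    by (simp add: form_value_def s_def two_pow algebra_simps)
  also have "\<dots> = ((2 ^ k) ^ 15 * 2 ^ 84) * t ^ 15 * G"
    unfolding G_def by (simp only: power_mult_distrib mult_ac)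
  also have "((2::int) ^ k) ^ 15 * 2 ^ 84 = 2 ^ (15 * k + 84)"
    by (simp add: power_add power_mult mult.commute)
  finally have "form_value (1 + 2 ^ k * t) 1 = 2 ^ (15 * k + 84) * t ^ 15 * G" .
  moreover have "[s = 0] (mod 2 ^ (k - 1))"
    by (simp add: s_def cong_0_iff)
  then have "[G = (1 + 2 * 0) ^ 35 * (2 * 0 - 1) ^ 21 * (0 - 1) ^ 84 * (2 * 0 - 3) ^ 90] (mod 2 ^ (k - 1))"
    unfolding G_def by (intro cong_mult cong_pow cong_add cong_diff cong_refl)
  ultimately show "\<exists>u G. form_value u 1 = 2 ^ (15 * k + 84) * t ^ 15 * G \<and> [G = - (3 ^ 90)] (mod 2 ^ (k - 1))"
    by auto
qed simp

lemma two_adic_family_B: "two_adic_family (\<lambda>u. form_value u 1) 21 125 21 1"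
  unfolding two_adic_family_def
proof (intro conjI allI impI)
  fix k :: nat and t :: int
  assume k: "k \<ge> 2"
  define s where "s = 2 ^ (k - 1) * t"
  define G where "G = (1 + s) ^ 35 * (1 + 2 * s) ^ 15 * (2 * s - 1) ^ 84 * (s - 1) ^ 90"
  have two_pow: "(2::int) ^ k = 2 * 2 ^ (k - 1)"
    using k by (simp flip: power_Suc)
  have "form_value (2 + 2 ^ k * t) 1
          = (2 * (1 + s)) ^ 35 * (1 + 2 * s) ^ 15 * (2 ^ k * t) ^ 21 * (2 * s - 1) ^ 84 * (2 * (s - 1)) ^ 90"
    by (simp add: form_value_def s_def two_pow algebra_simps)
  also have "\<dots> = ((2 ^ k) ^ 21 * (2 ^ 35 * 2 ^ 90)) * t ^ 21 * G"
    unfolding G_def by (simp only: power_mult_distrib mult_ac)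
  also have "((2::int) ^ k) ^ 21 * (2 ^ 35 * 2 ^ 90) = 2 ^ (21 * k + 125)"
    by (simp add: power_add power_mult mult.commute)
  finally have "form_value (2 + 2 ^ k * t) 1 = 2 ^ (21 * k + 125) * t ^ 21 * G" .
  moreover have "[s = 0] (mod 2 ^ (k - 1))"
    by (simp add: s_def cong_0_iff)
  then have "[G = (1 + 0) ^ 35 * (1 + 2 * 0) ^ 15 * (2 * 0 - 1) ^ 84 * (0 - 1) ^ 90] (mod 2 ^ (k - 1))"
    unfolding G_def by (intro cong_mult cong_pow cong_add cong_diff cong_refl)
  ultimately show "\<exists>u G. form_value u 1 = 2 ^ (21 * k + 125) * t ^ 21 * G \<and> [G = 1] (mod 2 ^ (k - 1))"
    by auto
qed simp

lemma two_adic_family_C: "two_adic_family (\<lambda>u. form_value u 1) 84 15 0 (3 ^ 35)"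
  unfolding two_adic_family_def
proof (intro conjI allI impI)
  fix k :: nat and t :: int
  assume k: "k \<ge> 2"
  define s :: int where "s = 2 ^ (k - 1)"
  define G where "G = (3 + 2 * s) ^ 35 * (1 + s) ^ 15 * (1 + 2 * s) ^ 21 * (2 * s - 1) ^ 90"
  have two_pow: "(2::int) ^ k = 2 * 2 ^ (k - 1)"
    using k by (simp flip: power_Suc)
  have "form_value (3 + 2 ^ k) 1
          = (3 + 2 * s) ^ 35 * (2 * (1 + s)) ^ 15 * (1 + 2 * s) ^ 21 * (2 ^ k) ^ 84 * (2 * s - 1) ^ 90"
    by (simp add: form_value_def s_def two_pow algebra_simps)
  also have "\<dots> = ((2 ^ k) ^ 84 * 2 ^ 15) * t ^ 0 * G"
    unfolding G_def by (simp only: power_mult_distrib power_0 mult_1_right mult_ac)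
  also have "((2::int) ^ k) ^ 84 * 2 ^ 15 = 2 ^ (84 * k + 15)"
    by (simp add: power_add power_mult mult.commute)
  finally have "form_value (3 + 2 ^ k) 1 = 2 ^ (84 * k + 15) * t ^ 0 * G" .
  moreover have "[s = 0] (mod 2 ^ (k - 1))"
    by (simp add: s_def cong_0_iff)
  then have "[G = (3 + 2 * 0) ^ 35 * (1 + 0) ^ 15 * (1 + 2 * 0) ^ 21 * (2 * 0 - 1) ^ 90] (mod 2 ^ (k - 1))"
    unfolding G_def by (intro cong_mult cong_pow cong_add cong_diff cong_refl)
  ultimately show "\<exists>u G. form_value u 1 = 2 ^ (84 * k + 15) * t ^ 0 * G \<and> [G = 3 ^ 35] (mod 2 ^ (k - 1))"
    by auto
qed simp

lemma two_adic_family_pair_exists: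
  fixes m :: int
  obtains cA dA eA gA cB dB eB gB where
    "two_adic_family (\<lambda>u. form_value u 1) cA dA eA gA" "odd eA"
    "two_adic_family (\<lambda>u. form_value u 1) cB dB eB gB" "cA > 0" "cB > 0"
    "int (gcd cA cB) dvd m + int dB - int dA"
proof -
  consider "m mod 3 = 1" | "m mod 3 = 2" | "m mod 3 = 0" by linarith
  then show ?thesis
  proof cases
    case 1
    then have "int (gcd 15 21) dvd m + 125 - 84" by (simp add: gcd_non_0_nat, presburger)
    then show ?thesis using that[OF two_adic_family_A _ two_adic_family_B] by simp
  next
    case 2
    then have "int (gcd 21 15) dvd m + 84 - 125" by (simp add: gcd_non_0_nat, presburger)
    then show ?thesis using that[OF two_adic_family_B _ two_adic_family_A] by simp
  next
    case 3
    then have "int (gcd 15 84) dvd m + 15 - 84" by (simp add: gcd_non_0_nat, presburger)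
    then show ?thesis using that[OF two_adic_family_A _ two_adic_family_C] by simp
  qed
qed

lemma two_adic_family_quotient_approx:
  assumes A: "two_adic_family f cA dA eA gA" "odd eA" and B: "two_adic_family f cB dB eB gB"
    and k: "0 < N" "N < kA" "2 \<le> kB" and exponents: "cA * kA + dA + be = al + (cB * kB + dB)"
    and P: "odd P" and Q: "odd Q"
  obtains u v where "f v \<noteq> 0"
    "padic_abs 2 (of_int (f u) / of_int (f v) - of_int (2 ^ al * P) / of_int (2 ^ be * Q))
       \<le> 2 powr - (real al - real be + real N)"
proof -
  obtain v V where v: "f v = 2 ^ (cB * kB + dB) * V" "odd V"
    by (rule two_adic_family_odd_value[OF B k(3)])
  obtain u U where u: "f u = 2 ^ (cA * kA + dA) * U" "[U * Q = P * V] (mod 2 ^ N)"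
    by (rule two_adic_family_value_with_unit_part[OF A k(1,2) Q, where R = "P * V"])
       (use P v(2) in simp)
  have "f v \<noteq> 0" using v by auto
  moreover have "padic_abs 2 (of_int (f u) / of_int (f v) - of_int (2 ^ al * P) / of_int (2 ^ be * Q))
                   \<le> 2 powr - (real al - real be + real N)"
    by (rule padic_abs_two_quotient_diff_le[OF u(1) v Q exponents u(2)])
  ultimately show ?thesis by (rule that)
qed

lemma two_adic_approx_by_form_quotient:
  fixes a :: rat
  assumes "a \<noteq> 0"
  obtains u v where "form_value v 1 \<noteq> 0"
    "padic_abs 2 (of_int (form_value u 1) / of_int (form_value v 1) - a) \<le> 2 powr - real N0"
proof -
  obtain al be P Q where P: "odd P" and Q: "odd Q" and a: "a = of_int (2 ^ al * P) / of_int (2 ^ be * Q)"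
    by (rule rat_two_adic_decomposition[OF assms])
  define m where "m = int al - int be"
  define N where "N = nat (int N0 - m) + 1"
  obtain cA dA eA gA cB dB eB gB where
    A: "two_adic_family (\<lambda>u. form_value u 1) cA dA eA gA" "odd eA" and
    B: "two_adic_family (\<lambda>u. form_value u 1) cB dB eB gB" and
    c: "cA > 0" "cB > 0" "int (gcd cA cB) dvd m + int dB - int dA"
    by (rule two_adic_family_pair_exists[of m])
  obtain kA kB where k: "kA \<ge> N + 1" "kB \<ge> N + 1" "int cA * int kA - int cB * int kB = m + int dB - int dA"
    by (rule linear_diophantine_large_solutions[OF c, where K = "N + 1"])
  have "N > 0" unfolding N_def by simp
  with k have "N < kA" "2 \<le> kB" by linarith+
  moreover have "int (cA * kA + dA + be) = int (al + (cB * kB + dB))"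
    using k(3) unfolding m_def by simp
  then have "cA * kA + dA + be = al + (cB * kB + dB)"
    by (simp only: of_nat_eq_iff)
  ultimately obtain u v where "form_value v 1 \<noteq> 0" and close:
    "padic_abs 2 (of_int (form_value u 1) / of_int (form_value v 1) - a) \<le> 2 powr - (real al - real be + real N)"
    unfolding a using two_adic_family_quotient_approx[OF A B \<open>N > 0\<close> _ _ _ P Q] by metis
  moreover have "2 powr - (real al - real be + real N) \<le> 2 powr - real N0"
    unfolding N_def m_def by (intro powr_mono) linarith+
  ultimately show ?thesis
    using that order_trans by blast
qed

theorem padic_dense_two_form_quotients: "padic_dense 2 (int_quotients (range (\<lambda>u. form_value u 1)))"
  unfolding padic_dense_def
proof (intro allI impI)
  fix a :: rat and \<epsilon> :: real
  assume "\<epsilon> > 0"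
  then obtain N0 where N0: "2 powr - real N0 < \<epsilon>"
    by (rule exists_two_powr_less)
  obtain u v where nz: "form_value v 1 \<noteq> 0"
    and close: "padic_abs 2 (of_int (form_value u 1) / of_int (form_value v 1) - a) < \<epsilon>"
  proof (cases "a = 0")
    case True
    obtain v V where "form_value v 1 = 2 ^ (15 * 2 + 84) * V" "odd V"
      by (rule two_adic_family_odd_value[OF two_adic_family_A, of 2]) simp
    moreover have "form_value 0 1 = 0" by (simp add: form_value_def)
    ultimately show ?thesis
      using that[of v 0] True \<open>\<epsilon> > 0\<close> by (auto simp: padic_abs_def)
  next
    case False
    then obtain u v where "form_value v 1 \<noteq> 0"
      "padic_abs 2 (of_int (form_value u 1) / of_int (form_value v 1) - a) \<le> 2 powr - real N0"
      by (rule two_adic_approx_by_form_quotient)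
    then show ?thesis
      using that[of v u] N0 by linarith
  qed
  from nz have "of_int (form_value u 1) / of_int (form_value v 1)
                  \<in> int_quotients (range (\<lambda>u. form_value u 1))"
    unfolding int_quotients_def by blast
  with close show "\<exists>s\<in>int_quotients (range (\<lambda>u. form_value u 1)). padic_abs 2 (s - a) < \<epsilon>"
    by blast
qed

section \<open>The form as a polynomial\<close>

definition form_poly :: "int_mpoly \<Rightarrow> int_mpoly \<Rightarrow> int_mpoly" where
  "form_poly U W = U ^ 35 * (U - W) ^ 15 * (U - 2 * W) ^ 21 * (U - 3 * W) ^ 84 * (U - 4 * W) ^ 90 * W ^ 70"

lemma mpoly_eval_form_poly:
  "mpoly_eval (form_poly U W) x = form_value (mpoly_eval U x) (mpoly_eval W x)"
  by (simp add: form_poly_def form_value_def mpoly_eval_simps)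

lemma vars_below_form_poly:
  "vars_below n U \<Longrightarrow> vars_below n W \<Longrightarrow> vars_below n (form_poly U W)"
  unfolding form_poly_def
  by (intro vars_below_mult vars_below_power vars_below_diff vars_below_numeral)

lemma homogeneous_form_poly:
  assumes U: "homogeneous 1 U" and W: "homogeneous 1 W"
  shows "homogeneous 315 (form_poly U W)"
proof -
  have linear: "homogeneous 1 (U - c * W)" if "homogeneous 0 c" for c
  proof -
    have "homogeneous 1 (c * W)" using homogeneous_mult[OF that W] by simp
    then show ?thesis by (rule homogeneous_diff[OF U])
  qed
  have "homogeneous (35 * 1 + 15 * 1 + 21 * 1 + 84 * 1 + 90 * 1 + 70 * 1) (form_poly U W)"
    unfolding form_poly_def
    using homogeneous_power[OF U] homogeneous_power[OF W] homogeneous_power[OF homogeneous_diff[OF U W]]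
      homogeneous_power[OF linear[OF homogeneous_numeral]]
    by (intro homogeneous_mult) auto
  then show ?thesis by simp
qed

lemma form_poly_realises_form_values:
  assumes "n \<ge> 1"
  obtains F where "vars_below n F" "n \<ge> 2 \<longrightarrow> is_form F"
    "range (\<lambda>u. form_value u 1) \<subseteq> mpoly_eval F ` int_points n"
    "mpoly_eval F ` int_points n \<subseteq> {form_value u w | u w. True}"
proof (cases "n \<ge> 2")
  case True
  define F where "F = form_poly (mvar 0) (mvar 1)"
  have "vars_below n F"
    unfolding F_def using True by (intro vars_below_form_poly vars_below_mvar) auto
  moreover have "is_form F"
    unfolding F_def
    by (rule homogeneous_imp_is_form[OF homogeneous_form_poly[OF homogeneous_mvar homogeneous_mvar]])
  moreover have "form_value u 1 \<in> mpoly_eval F ` int_points n" for u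
  proof
    show "(\<lambda>i. if i = 0 then u else if i = 1 then 1 else 0) \<in> int_points n"
      using True by (auto simp: int_points_def)
  qed (simp add: F_def mpoly_eval_form_poly mpoly_eval_mvar)
  moreover have "mpoly_eval F ` int_points n \<subseteq> {form_value u w | u w. True}"
    by (auto simp: F_def mpoly_eval_form_poly mpoly_eval_mvar)
  ultimately show ?thesis
    using that by blast
next
  case False
  define F where "F = form_poly (mvar 0) 1"
  have "vars_below n F"
    unfolding F_def using assms by (intro vars_below_form_poly vars_below_mvar vars_below_one) auto
  moreover have "form_value u 1 \<in> mpoly_eval F ` int_points n" for u
  proof
    show "(\<lambda>i. if i = 0 then u else 0) \<in> int_points n"
      using assms by (auto simp: int_points_def)
  qed (simp add: F_def mpoly_eval_form_poly mpoly_eval_mvar mpoly_eval_one)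
  moreover have "mpoly_eval F ` int_points n \<subseteq> {form_value u w | u w. True}"
    by (auto simp: F_def mpoly_eval_form_poly mpoly_eval_mvar)
  ultimately show ?thesis
    using that False by blast
qed

lemma ratio_set_eq_int_quotients: "ratio_set n F = int_quotients (mpoly_eval F ` int_points n)"
  unfolding ratio_set_def int_quotients_def by blast

theorem theorem1p7:
  fixes n :: nat
  assumes "n \<ge> 1"
  shows "\<exists>(F::int_mpoly) (p::nat) (M::real).
           vars_below n F \<and> (n \<ge> 2 \<longrightarrow> is_form F) \<and> prime p \<and> M > 0 \<and>
           padic_dense p (ratio_set n F) \<and>
           (\<forall>q::nat. prime q \<and> real q > M \<longrightarrow> \<not> padic_dense q (ratio_set n F))"
proof -
  obtain F where F: "vars_below n F" "n \<ge> 2 \<longrightarrow> is_form F"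
    and realised: "range (\<lambda>u. form_value u 1) \<subseteq> mpoly_eval F ` int_points n"
      "mpoly_eval F ` int_points n \<subseteq> {form_value u w | u w. True}"
    by (rule form_poly_realises_form_values[OF assms])
  have "padic_dense 2 (ratio_set n F)"
    unfolding ratio_set_eq_int_quotients
    by (rule padic_dense_mono[OF padic_dense_two_form_quotients int_quotients_mono[OF realised(1)]])
  moreover have "\<not> padic_dense q (ratio_set n F)" if "prime q" "real q > 4" for q
    unfolding ratio_set_eq_int_quotients
    by (rule not_padic_dense_form_quotients[OF that(1) _ realised(2)]) (use that(2) in simp)
  ultimately show ?thesis
    using F by (intro exI[of _ F] exI[of _ 2] exI[of _ "4::real"]) auto
qed

end
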